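(* Every $K_4$-free disk graph is $11$-degenerate.
   Context: A disk graph is the intersection graph of a finite set of closed disks in $\mathbb{R}^2$. A graph is $K_4$-free if it contains no complete subgraph on $4$ vertices. A graph is $c$-degenerate if its vertices can be ordered $v_1,\dots,v_n$ so that each $v_i$ has at most $c$ neighbours among $v_1,\dots,v_{i-1}$. *)

theory Defs
  imports "HOL-Analysis.Analysis"
begin

text \<open>A closed disk in the plane is represented by a pair (centre, radius) with positive radius.\<close>

type_synonym disk = "(real^2) \<times> real"

definition disk_set :: "disk \<Rightarrow> (real^2) set" where
  "disk_set d = cball (fst d) (snd d)"

definition disk_adj :: "disk \<Rightarrow> disk \<Rightarrow> bool" where
  "disk_adj d e \<longleftrightarrow> d \<noteq> e \<and> disk_set d \<inter> disk_set e \<noteq> {}"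

definition K4_free :: "'a set \<Rightarrow> ('a \<Rightarrow> 'a \<Rightarrow> bool) \<Rightarrow> bool" where
  "K4_free V E \<longleftrightarrow> \<not> (\<exists>S \<subseteq> V. card S = 4 \<and> (\<forall>x\<in>S. \<forall>y\<in>S. x \<noteq> y \<longrightarrow> E x y))"

definition degenerate :: "nat \<Rightarrow> 'a set \<Rightarrow> ('a \<Rightarrow> 'a \<Rightarrow> bool) \<Rightarrow> bool" where
  "degenerate c V E \<longleftrightarrow> (\<exists>vs. distinct vs \<and> set vs = V \<and>
     (\<forall>i < length vs. card {j. j < i \<and> E (vs ! i) (vs ! j)} \<le> c))"

end

theory Submission
  imports Defs
begin

text \<open>Let \<open>d\<close> be a disk of minimum radius \<open>r\<close>, centred at \<open>c\<close>. Every neighbour \<open>e\<close> of \<open>d\<close> is at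
  least as large, so it contains a disk of radius \<open>r\<close> whose centre \<open>p\<^sub>e\<close> lies within \<open>2r\<close> of \<open>c\<close>.
  If the directions of \<open>p\<^sub>e - c\<close> and \<open>p\<^sub>f - c\<close> differ by at most \<open>\<pi>/3\<close>, then
  \<open>|p\<^sub>e - p\<^sub>f| \<le> 2r\<close>, so \<open>e\<close> and \<open>f\<close> intersect. Among twelve directions some three lie
  pairwise within \<open>\<pi>/3\<close>; together with \<open>d\<close> they would form a \<open>K\<^sub>4\<close>. Hence a smallest disk has at
  most eleven neighbours, and removing it repeatedly gives the degeneracy ordering.\<close>

lemma degenerate_append_vertex:
  assumes "degenerate c W E" "finite W" "v \<notin> W" "card {w\<in>W. E v w} \<le> c"
  shows "degenerate c (insert v W) E"
proof -
  obtain vs where vs: "distinct vs" "set vs = W"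
    "\<forall>i < length vs. card {j. j < i \<and> E (vs ! i) (vs ! j)} \<le> c"
    using assms(1) unfolding degenerate_def by blast
  define us where "us = vs @ [v]"
  have "card {j. j < i \<and> E (us ! i) (us ! j)} \<le> c" if "i < length us" for i
  proof (cases "i < length vs")
    case True
    then have "{j. j < i \<and> E (us ! i) (us ! j)} = {j. j < i \<and> E (vs ! i) (vs ! j)}"
      by (auto simp: us_def nth_append)
    with True vs(3) show ?thesis by simp
  next
    case False
    with that have i: "i = length vs" by (simp add: us_def)
    then have "{j. j < i \<and> E (us ! i) (us ! j)} = {j. j < length vs \<and> E v (vs ! j)}"
      by (auto simp: us_def nth_append)
    moreover have "(!) vs ` {j. j < length vs \<and> E v (vs ! j)} = {w\<in>W. E v w}"
      using vs(2) by (auto simp: in_set_conv_nth)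
    moreover have "inj_on ((!) vs) {j. j < length vs \<and> E v (vs ! j)}"
      using vs(1) by (simp add: inj_on_nth)
    ultimately have "card {j. j < i \<and> E (us ! i) (us ! j)} = card {w\<in>W. E v w}"
      by (metis card_image)
    with assms(4) show ?thesis by simp
  qed
  moreover have "distinct us" "set us = insert v W"
    using vs(1,2) assms(3) by (auto simp: us_def)
  ultimately show ?thesis
    unfolding degenerate_def by blast
qed

lemma degenerate_if_every_subgraph_has_low_degree_vertex:
  assumes "finite V" "\<And>W. W \<subseteq> V \<Longrightarrow> W \<noteq> {} \<Longrightarrow> \<exists>v\<in>W. card {w\<in>W. E v w} \<le> c"
  shows "degenerate c V E"
  using assms
proof (induction V rule: finite_psubset_induct)
  case (psubset V)
  show ?case
  proof (cases "V = {}")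
    case True
    then show ?thesis
      unfolding degenerate_def by simp
  next
    case False
    then obtain v where v: "v \<in> V" "card {w\<in>V. E v w} \<le> c"
      using psubset.prems by blast
    have IH: "degenerate c (V - {v}) E"
      using psubset v(1) by (intro psubset.IH) auto
    have "card {w\<in>V - {v}. E v w} \<le> card {w\<in>V. E v w}"
      using psubset.hyps by (intro card_mono) auto
    with v(2) have "card {w\<in>V - {v}. E v w} \<le> c"
      by linarith
    with IH psubset.hyps have "degenerate c (insert v (V - {v})) E"
      by (intro degenerate_append_vertex) auto
    with v(1) show ?thesis
      by (simp add: insert_absorb)
  qed
qed

lemma K4_free_subset: "K4_free V E \<Longrightarrow> W \<subseteq> V \<Longrightarrow> K4_free W E"
  unfolding K4_free_def by (meson order.trans)

lemma K4_free_neighbourhood_triangle_free: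
  assumes "K4_free V E" "symp E" "{v, x, y, z} \<subseteq> V" "distinct [v, x, y, z]"
    "E v x" "E v y" "E v z" "E x y" "E x z" "E y z"
  shows False
proof -
  have "E x v" "E y v" "E z v" "E y x" "E z x" "E z y"
    using assms(2,5-) by (metis sympD)+
  with assms(5-) have "\<forall>u\<in>{v, x, y, z}. \<forall>w\<in>{v, x, y, z}. u \<noteq> w \<longrightarrow> E u w"
    by auto
  moreover have "card {v, x, y, z} = 4"
    using assms(4) by simp
  ultimately show False
    using assms(1,3) unfolding K4_free_def by blast
qed

lemma cball_Int_cball_nonempty:
  fixes a c :: "'a::real_normed_vector"
  assumes "0 \<le> s" "0 \<le> t" "dist a c \<le> s + t"
  shows "cball a s \<inter> cball c t \<noteq> {}"
proof (cases "s + t = 0")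
  case True
  with assms have "a \<in> cball a s \<inter> cball c t" by simp
  then show ?thesis by blast
next
  case False
  define p where "p = a + (s / (s + t)) *\<^sub>R (c - a)"
  have "dist a p = s / (s + t) * dist a c"
    using assms by (simp add: p_def dist_norm norm_minus_commute)
  also have "\<dots> \<le> s / (s + t) * (s + t)"
    using assms by (intro mult_left_mono) auto
  also have "\<dots> = s"
    using False by simp
  finally have "p \<in> cball a s" by simp
  have "c - p = (1 - s / (s + t)) *\<^sub>R (c - a)"
    by (simp add: p_def scaleR_left_diff_distrib)
  also have "1 - s / (s + t) = t / (s + t)"
    using False by (simp add: field_simps)
  finally have "c - p = (t / (s + t)) *\<^sub>R (c - a)" .
  then have "dist c p = t / (s + t) * dist c a"
    using assms by (simp add: dist_norm)
  also have "\<dots> \<le> t / (s + t) * (s + t)"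
    using assms by (intro mult_left_mono) (auto simp: dist_commute)
  also have "\<dots> = t"
    using False by simp
  finally have "p \<in> cball c t" by simp
  with \<open>p \<in> cball a s\<close> show ?thesis by blast
qed

definition dir :: "real \<Rightarrow> real^2" where
  "dir t = vector [cos t, sin t]"

lemma inner_dir_dir: "dir a \<bullet> dir b = cos (a - b)"
  by (simp add: inner_vec_def sum_2 dir_def cos_diff)

lemma polar_coordinates:
  fixes v :: "real^2"
  obtains t where "0 \<le> t" "t < 2*pi" "v = norm v *\<^sub>R dir t"
proof (cases "v = 0")
  case True
  then show ?thesis using that[of 0] by simp
next
  case False
  define u where "u = v /\<^sub>R norm v"
  have "(u$1)^2 + (u$2)^2 = (norm u)^2"
    unfolding power2_norm_eq_inner by (simp add: inner_vec_def sum_2 power2_eq_square)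
  also have "norm u = 1"
    using False by (simp add: u_def)
  finally have "(u$1)^2 + (u$2)^2 = 1" by simp
  then obtain t where t: "0 \<le> t" "t < 2*pi" "u$1 = cos t" "u$2 = sin t"
    using sincos_total_2pi by metis
  then have "u = dir t"
    by (simp add: vec_eq_iff forall_2 dir_def)
  moreover have "v = norm v *\<^sub>R u"
    using False by (simp add: u_def)
  ultimately show ?thesis
    using that t(1,2) by metis
qed

lemma norm_diff_scaleR_dir_le_max:
  assumes "0 \<le> s" "0 \<le> t" "1/2 \<le> cos (a - b)"
  shows "norm (s *\<^sub>R dir a - t *\<^sub>R dir b) \<le> max s t"
proof -
  have "(norm (s *\<^sub>R dir a - t *\<^sub>R dir b))^2
      = s * s * (dir a \<bullet> dir a) - 2 * s * t * (dir a \<bullet> dir b) + t * t * (dir b \<bullet> dir b)"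
    using inner_commute[of "dir b" "dir a"]
    unfolding power2_norm_eq_inner inner_diff_left inner_diff_right inner_scaleR_left inner_scaleR_right
    by (simp add: algebra_simps)
  also have "\<dots> = s^2 + t^2 - 2 * s * t * cos (a - b)"
    by (simp add: inner_dir_dir power2_eq_square)
  also have "\<dots> \<le> s^2 + t^2 - s * t"
    using mult_left_mono[OF assms(3), of "2 * s * t"] assms by simp
  also have "\<dots> \<le> (max s t)^2"
  proof (cases "s \<le> t")
    case True
    then have "s * s \<le> s * t" using assms by (intro mult_left_mono)
    with True show ?thesis by (simp add: max_def power2_eq_square)
  next
    case False
    then have "t * t \<le> s * t" using assms by (intro mult_right_mono) auto
    with False show ?thesis by (simp add: max_def power2_eq_square)
  qed
  finally show ?thesis
    by (rule power2_le_imp_le) (use assms(1) in \<open>simp add: le_max_iff_disj\<close>)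
qed

lemma cos_ge_half: "\<bar>u\<bar> \<le> pi/3 \<Longrightarrow> 1/2 \<le> cos u"
  using cos_monotone_0_pi_le[of "\<bar>u\<bar>" "pi/3"] by (simp add: cos_60)

lemma cyclic_gap_le_pi_div_3:
  fixes a :: "nat \<Rightarrow> real"
  shows "(\<exists>i<10. a (i+2) - a i \<le> pi/3) \<or> a 0 + 2*pi - a 10 \<le> pi/3"
proof (rule ccontr)
  assume "\<not> ?thesis"
  then have gap: "pi/3 < a (i+2) - a i" if "i < 10" for i
    using that by auto
  have "pi/3 < a 2 - a 0" "pi/3 < a 4 - a 2" "pi/3 < a 6 - a 4" "pi/3 < a 8 - a 6"
    "pi/3 < a 10 - a 8"
    using gap[of 0] gap[of 2] gap[of 4] gap[of 6] gap[of 8] by (simp_all add: eval_nat_numeral)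
  \<comment> \<open>together with the last gap, these six gaps sum to \<open>2\<pi>\<close>\<close>
  with \<open>\<not> ?thesis\<close> show False
    by linarith
qed

lemma twelve_angles_have_close_triple:
  fixes \<theta> :: "'a \<Rightarrow> real"
  assumes "finite N" "12 \<le> card N" "\<forall>x\<in>N. 0 \<le> \<theta> x \<and> \<theta> x < 2*pi"
  obtains x y z where "x \<in> N" "y \<in> N" "z \<in> N" "distinct [x, y, z]"
    "1/2 \<le> cos (\<theta> x - \<theta> y)" "1/2 \<le> cos (\<theta> x - \<theta> z)" "1/2 \<le> cos (\<theta> y - \<theta> z)"
proof -
  note close_triple = that
  obtain xs0 where "distinct xs0" "set xs0 = N"
    using finite_distinct_list[OF assms(1)] by blast
  define xs where "xs = sort_key \<theta> xs0"
  have xs: "distinct xs" "set xs = N" "sorted (map \<theta> xs)"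
    using \<open>distinct xs0\<close> \<open>set xs0 = N\<close> by (simp_all add: xs_def)
  have len: "12 \<le> length xs"
    using assms(2) xs distinct_card by metis
  define a where "a i = \<theta> (xs ! i)" for i
  have mono: "a i \<le> a j" if "i \<le> j" "j < length xs" for i j
    using sorted_nth_mono[OF xs(3), of i j] that by (simp add: a_def)
  have elem: "xs ! i \<in> N" if "i < length xs" for i
    using that xs(2) nth_mem by blast
  have triple: thesis if "i < length xs" "j < length xs" "k < length xs" "distinct [i, j, k]"
    "1/2 \<le> cos (a i - a j)" "1/2 \<le> cos (a i - a k)" "1/2 \<le> cos (a j - a k)" for i j k
    using that elem xs(1) by (intro close_triple[of "xs ! i" "xs ! j" "xs ! k"]) (auto simp: a_def nth_eq_iff_index_eq)
  from cyclic_gap_le_pi_div_3[of a]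
  consider i where "i < 10" "a (i+2) - a i \<le> pi/3" | "a 0 + 2*pi - a 10 \<le> pi/3"
    by blast
  then show thesis
  proof cases
    case (1 i)
    have "a i \<le> a (i+1)" "a (i+1) \<le> a (i+2)"
      using mono 1 len by auto
    with 1 show thesis
      by (intro triple[of i "i+1" "i+2"] cos_ge_half) (use len in auto)
  next
    case 2
    have "a 10 \<le> a 11" "0 \<le> a 0" "a 11 < 2*pi"
      using mono[of 10 11] len assms(3) elem[of 0] elem[of 11]
      by (auto simp: a_def simp del: length_greater_0_conv)
    have wrap: "1/2 \<le> cos (a k - a 0)" if "a 10 \<le> a k" "a k < 2*pi" for k
    proof -
      have "1/2 \<le> cos (a k - a 0 - 2*pi)"
        using that 2 \<open>0 \<le> a 0\<close> by (intro cos_ge_half) auto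
      then show ?thesis
        using cos_periodic[of "a k - a 0 - 2*pi"] by simp
    qed
    show thesis
      using 2 \<open>a 10 \<le> a 11\<close> \<open>0 \<le> a 0\<close> \<open>a 11 < 2*pi\<close>
      by (intro triple[of 10 11 0] wrap cos_ge_half) (use len in auto)
  qed
qed

lemma symp_disk_adj: "symp disk_adj"
  unfolding disk_adj_def by (rule sympI) blast

lemma inscribed_disk_near_centre:
  assumes "disk_adj d e" "snd d \<le> snd e"
  obtains p where "dist (fst d) p \<le> 2 * snd d" "cball p (snd d) \<subseteq> disk_set e"
proof -
  obtain z where "z \<in> disk_set d" "z \<in> disk_set e"
    using assms(1) unfolding disk_adj_def by blast
  then have z: "dist (fst d) z \<le> snd d" "dist (fst e) z \<le> snd e"
    by (simp_all add: disk_set_def)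
  have "0 \<le> snd d"
    using zero_le_dist z(1) by (rule order_trans)
  have "dist (fst d) (fst e) \<le> 2 * snd d + (snd e - snd d)"
    using dist_triangle[of "fst d" "fst e" z] z dist_commute[of "fst e" z] by linarith
  then have "cball (fst d) (2 * snd d) \<inter> cball (fst e) (snd e - snd d) \<noteq> {}"
    using assms(2) \<open>0 \<le> snd d\<close> by (intro cball_Int_cball_nonempty) auto
  then obtain p where "p \<in> cball (fst d) (2 * snd d)" "p \<in> cball (fst e) (snd e - snd d)"
    by blast
  then have p: "dist (fst d) p \<le> 2 * snd d" "dist (fst e) p \<le> snd e - snd d"
    by simp_all
  have "cball p (snd d) \<subseteq> disk_set e"
  proof
    fix x assume "x \<in> cball p (snd d)"
    then show "x \<in> disk_set e"
      using p(2) dist_triangle[of "fst e" x p] unfolding disk_set_def mem_cball by linarith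
  qed
  with p(1) show thesis by (rule that)
qed

lemma disk_adj_if_inscribed_disks_close:
  assumes "cball p r \<subseteq> disk_set e" "cball q r \<subseteq> disk_set f" "dist p q \<le> 2 * r" "e \<noteq> f"
  shows "disk_adj e f"
proof -
  have "cball p r \<inter> cball q r \<noteq> {}"
    by (intro cball_Int_cball_nonempty) (use assms(3) zero_le_dist[of p q] in linarith)+
  with assms show ?thesis
    unfolding disk_adj_def by blast
qed

lemma smallest_disk_neighbour_directions:
  assumes "\<forall>e\<in>N. disk_adj d e \<and> snd d \<le> snd e"
  obtains \<theta> where "\<forall>e\<in>N. 0 \<le> \<theta> e \<and> \<theta> e < 2*pi"
    "\<And>e f. e \<in> N \<Longrightarrow> f \<in> N \<Longrightarrow> e \<noteq> f \<Longrightarrow> 1/2 \<le> cos (\<theta> e - \<theta> f) \<Longrightarrow> disk_adj e f"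
proof -
  obtain c r where d: "d = (c, r)" by fastforce
  have "\<exists>q. dist c q \<le> 2 * r \<and> cball q r \<subseteq> disk_set e" if "e \<in> N" for e
  proof -
    have "disk_adj d e" "snd d \<le> snd e"
      using assms that by auto
    then obtain q where "dist (fst d) q \<le> 2 * snd d" "cball q (snd d) \<subseteq> disk_set e"
      by (rule inscribed_disk_near_centre)
    then show ?thesis by (auto simp: d)
  qed
  then obtain p where p: "\<And>e. e \<in> N \<Longrightarrow> dist c (p e) \<le> 2 * r \<and> cball (p e) r \<subseteq> disk_set e"
    by metis
  define s where "s e = norm (p e - c)" for e
  have "\<forall>e. \<exists>t. 0 \<le> t \<and> t < 2*pi \<and> p e - c = s e *\<^sub>R dir t"
    unfolding s_def using polar_coordinates by metis
  then obtain \<theta> where \<theta>: "\<forall>e. 0 \<le> \<theta> e \<and> \<theta> e < 2*pi \<and> p e - c = s e *\<^sub>R dir (\<theta> e)"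
    by (rule choice[THEN exE])
  then have polar: "\<And>e. p e - c = s e *\<^sub>R dir (\<theta> e)"
    by blast
  have "disk_adj e f" if "e \<in> N" "f \<in> N" "e \<noteq> f" "1/2 \<le> cos (\<theta> e - \<theta> f)" for e f
  proof (rule disk_adj_if_inscribed_disks_close)
    have "dist (p e) (p f) = norm ((p e - c) - (p f - c))"
      by (simp add: dist_norm)
    also have "\<dots> = norm (s e *\<^sub>R dir (\<theta> e) - s f *\<^sub>R dir (\<theta> f))"
      by (simp only: polar)
    also have "\<dots> \<le> max (s e) (s f)"
      using that(4) by (intro norm_diff_scaleR_dir_le_max) (auto simp: s_def)
    also have "\<dots> \<le> 2 * r"
      using p that(1,2) by (auto simp: s_def dist_norm norm_minus_commute)
    finally show "dist (p e) (p f) \<le> 2 * r" .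
  qed (use p that in auto)
  moreover have "\<forall>e\<in>N. 0 \<le> \<theta> e \<and> \<theta> e < 2*pi"
    using \<theta> by blast
  ultimately show thesis
    using that by blast
qed

lemma smallest_disk_degree_le_11:
  assumes "finite V" "K4_free V disk_adj" "d \<in> V" "\<forall>e\<in>V. snd d \<le> snd e"
  shows "card {e\<in>V. disk_adj d e} \<le> 11"
proof (rule ccontr)
  define N where "N = {e\<in>V. disk_adj d e}"
  assume "\<not> card {e\<in>V. disk_adj d e} \<le> 11"
  then have "12 \<le> card N" "finite N"
    using assms(1) by (simp_all add: N_def)
  have "\<forall>e\<in>N. disk_adj d e \<and> snd d \<le> snd e"
    using assms(4) by (auto simp: N_def)
  then obtain \<theta> where \<theta>_range: "\<forall>e\<in>N. 0 \<le> \<theta> e \<and> \<theta> e < 2*pi"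
    and adj: "\<And>e f. e \<in> N \<Longrightarrow> f \<in> N \<Longrightarrow> e \<noteq> f \<Longrightarrow> 1/2 \<le> cos (\<theta> e - \<theta> f) \<Longrightarrow> disk_adj e f"
    by (rule smallest_disk_neighbour_directions) blast
  obtain x y z where xyz: "x \<in> N" "y \<in> N" "z \<in> N" "distinct [x, y, z]"
    "1/2 \<le> cos (\<theta> x - \<theta> y)" "1/2 \<le> cos (\<theta> x - \<theta> z)" "1/2 \<le> cos (\<theta> y - \<theta> z)"
    by (rule twelve_angles_have_close_triple[OF \<open>finite N\<close> \<open>12 \<le> card N\<close> \<theta>_range])
  have "disk_adj d x" "disk_adj d y" "disk_adj d z" "{d, x, y, z} \<subseteq> V"
    using xyz(1-3) assms(3) by (auto simp: N_def)
  moreover from this have "distinct [d, x, y, z]"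
    using xyz(4) by (auto simp: disk_adj_def)
  moreover have "disk_adj x y" "disk_adj x z" "disk_adj y z"
    using xyz by (simp_all add: adj)
  ultimately show False
    using K4_free_neighbourhood_triangle_free[OF assms(2) symp_disk_adj] by blast
qed

theorem lemma6:
  fixes D :: "disk set"
  assumes "finite D"
    and "\<forall>d\<in>D. snd d > 0"
    and "K4_free D disk_adj"
  shows "degenerate 11 D disk_adj"
proof (rule degenerate_if_every_subgraph_has_low_degree_vertex[OF assms(1)])
  fix W assume "W \<subseteq> D" "W \<noteq> {}"
  then have "finite W" "K4_free W disk_adj"
    using assms(1,3) finite_subset K4_free_subset by blast+
  obtain d where "d \<in> W" "\<forall>e\<in>W. snd d \<le> snd e"
    using arg_min_if_finite[OF \<open>finite W\<close> \<open>W \<noteq> {}\<close>, of snd] by (metis not_less)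
  then show "\<exists>d\<in>W. card {e\<in>W. disk_adj d e} \<le> 11"
    using smallest_disk_degree_le_11[OF \<open>finite W\<close> \<open>K4_free W disk_adj\<close>] by blast
qed

end
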